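(* Let $b\ge2$ be an integer and let $w$ be a fixed block of $b$-ary digits of length $p\ge1$. For every integer $k\ge0$, $S_w(k)<\infty$, where $S_w(k)=\sum_m 1/m$ and $m$ ranges over the positive integers whose minimal base-$b$ representation (no leading zeros) contains exactly $k$ possibly overlapping occurrences of $w$. *)

theory Defs
  imports Complex_Main
begin

function digits_rev :: "nat \<Rightarrow> nat \<Rightarrow> nat list" where
  "digits_rev b m = (if m = 0 \<or> b < 2 then [] else (m mod b) # digits_rev b (m div b))"
  by pat_completeness auto
termination by (relation "measure snd") auto

definition base_digits :: "nat \<Rightarrow> nat \<Rightarrow> nat list" where
  "base_digits b m = rev (digits_rev b m)"

definition occurrences :: "nat list \<Rightarrow> nat list \<Rightarrow> nat" where
  "occurrences w ds = card {i. i + length w \<le> length ds \<and> take (length w) (drop i ds) = w}"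

end

theory Submission
  imports Defs
begin

text \<open>Write \<open>B = b ^ length w\<close> and let \<open>v < B\<close> be the number whose \<open>length w\<close>-digit
  representation is \<open>w\<close>. For \<open>m \<ge> B\<close> put \<open>q = m div B\<close>: the digits of \<open>q\<close> form a prefix
  of those of \<open>m\<close>, so \<open>q\<close> has no more occurrences of \<open>w\<close> than \<open>m\<close>, and strictly fewer
  when \<open>m mod B = v\<close>. Let \<open>S_K(N)\<close> be the sum of \<open>1/m\<close> over the \<open>0 < m < N\<close> with fewer
  than \<open>K\<close> occurrences. As \<open>1/m \<le> 1/(q B)\<close>, grouping the \<open>m\<close> by \<open>q\<close> gives
  \<open>S_(K+1)(N) \<le> B + ((B - 1) S_(K+1)(N) + S_K(N)) / B\<close>, i.e. \<open>S_(K+1)(N) \<le> B\<^sup>2 + S_K(N)\<close>.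
  Since \<open>S_0 = 0\<close>, this gives \<open>S_K(N) \<le> K B\<^sup>2\<close>, and the series for exactly \<open>k\<close>
  occurrences is dominated by the one for fewer than \<open>k + 1\<close>.\<close>

lemma base_digits_div:
  assumes "b \<ge> 2" and "m > 0"
  shows "base_digits b m = base_digits b (m div b) @ [m mod b]"
  using assms by (subst base_digits_def, subst digits_rev.simps) (simp add: base_digits_def)

lemma base_digits_div_pow_prefix:
  assumes "b \<ge> 2"
  shows "\<exists>ds. base_digits b m = base_digits b (m div b ^ j) @ ds"
proof (induction j)
  case 0
  show ?case by simp
next
  case (Suc j)
  then obtain ds where ds: "base_digits b m = base_digits b (m div b ^ j) @ ds" ..
  have div_Suc: "m div b ^ Suc j = m div b ^ j div b"
    by (metis div_mult2_eq power_Suc2)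
  show ?case
  proof (cases "m div b ^ j = 0")
    case True
    then show ?thesis
      unfolding div_Suc using ds by simp
  next
    case False
    then show ?thesis
      unfolding div_Suc using ds base_digits_div[OF assms, of "m div b ^ j"] by simp
  qed
qed

definition digits_value :: "nat \<Rightarrow> nat list \<Rightarrow> nat" where
  "digits_value b ds = foldl (\<lambda>a d. a * b + d) 0 ds"

lemma digits_value_snoc [simp]: "digits_value b (ds @ [d]) = digits_value b ds * b + d"
  by (simp add: digits_value_def)

lemma digits_value_less:
  assumes "\<forall>d\<in>set ds. d < b"
  shows "digits_value b ds < b ^ length ds"
  using assms
proof (induction ds rule: rev_induct)
  case Nil
  then show ?case by (simp add: digits_value_def)
next
  case (snoc d ds)
  have "digits_value b ds * b + d < (digits_value b ds + 1) * b"
    using snoc.prems by simp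
  also have "\<dots> \<le> b ^ length ds * b"
    using snoc by (intro mult_le_mono1) simp
  finally show ?case by (simp add: mult.commute)
qed

lemma base_digits_append_block:
  assumes "b \<ge> 2" and "q > 0" and "\<forall>d\<in>set ds. d < b"
  shows "base_digits b (q * b ^ length ds + digits_value b ds) = base_digits b q @ ds"
  using assms(3)
proof (induction ds rule: rev_induct)
  case Nil
  then show ?case by (simp add: digits_value_def)
next
  case (snoc d ds)
  define n where "n = q * b ^ length ds + digits_value b ds"
  have "n > 0" using assms(2) \<open>b \<ge> 2\<close> by (simp add: n_def)
  have "d < b" using snoc.prems by simp
  have "base_digits b (q * b ^ length (ds @ [d]) + digits_value b (ds @ [d]))
      = base_digits b (n * b + d)"
    by (simp add: n_def algebra_simps)
  also have "\<dots> = base_digits b n @ [d]"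
    using base_digits_div[OF assms(1), of "n * b + d"] \<open>n > 0\<close> \<open>d < b\<close> \<open>b \<ge> 2\<close> by simp
  also have "\<dots> = base_digits b q @ ds @ [d]"
    using snoc by (simp add: n_def)
  finally show ?case by simp
qed

lemma finite_occurrence_positions:
  "finite {i. i + length w \<le> length ds \<and> take (length w) (drop i ds) = w}"
  by (rule finite_subset[of _ "{..length ds}"]) auto

lemma occurrences_append_mono: "occurrences w xs \<le> occurrences w (xs @ ys)"
  unfolding occurrences_def by (rule card_mono[OF finite_occurrence_positions]) auto

lemma occurrences_append_self:
  assumes "w \<noteq> []"
  shows "occurrences w xs < occurrences w (xs @ w)"
proof -
  let ?S = "\<lambda>ds. {i. i + length w \<le> length ds \<and> take (length w) (drop i ds) = w}"
  have "?S xs \<subseteq> ?S (xs @ w)"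
    by auto
  moreover have "length xs \<in> ?S (xs @ w) - ?S xs"
    using assms by simp
  ultimately have "?S xs \<subset> ?S (xs @ w)"
    by blast
  then show ?thesis
    unfolding occurrences_def by (rule psubset_card_mono[OF finite_occurrence_positions])
qed

lemma sum_div_mod_reindex:
  fixes h :: "nat \<Rightarrow> nat \<Rightarrow> 'a::comm_monoid_add"
  assumes "B > 0"
  shows "(\<Sum>m<B * N. h (m div B) (m mod B)) = (\<Sum>q<N. \<Sum>s<B. h q s)"
proof -
  have bound: "q * B + s < B * N" if "q < N" and "s < B" for q s
  proof -
    have "q * B + s < (q + 1) * B" using that by simp
    also have "\<dots> \<le> N * B" using that by (intro mult_le_mono1) simp
    finally show ?thesis by (simp add: mult.commute)
  qed
  have "(\<Sum>m<B * N. h (m div B) (m mod B)) = (\<Sum>(q, s)\<in>{..<N} \<times> {..<B}. h q s)"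
  proof (rule sum.reindex_bij_witness[where i = "\<lambda>(q, s). q * B + s" and j = "\<lambda>m. (m div B, m mod B)"])
  qed (use assms bound in \<open>auto simp: less_mult_imp_div_less mult.commute\<close>)
  then show ?thesis
    by (simp add: sum.cartesian_product)
qed

lemma sum_lessThan_if_eq:
  fixes x y :: "'a::comm_ring_1"
  assumes "v < B"
  shows "(\<Sum>s<B. if s = v then x else y) = x + of_nat (B - 1) * y"
proof -
  have "(\<Sum>s<B. if s = v then x else y) = x + (\<Sum>s\<in>{..<B} - {v}. y)"
    using assms by (subst sum.remove[of _ v]) auto
  also have "\<dots> = x + of_nat (B - 1) * y"
    using assms by simp
  finally show ?thesis .
qed

lemma sum_le_of_div_mod_recursion:
  fixes F G :: "nat \<Rightarrow> real" and B v :: nat and C :: real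
  assumes "B > 0" and "v < B" and F_nonneg: "\<And>m. 0 \<le> F m"
    and F_rec: "\<And>m. F m \<le> (if m < B then 1 else 0)
                    + (if m mod B = v then G (m div B) else F (m div B)) / B"
    and G_bound: "\<And>N. (\<Sum>q<N. G q) \<le> C"
  shows "(\<Sum>m<N. F m) \<le> real B ^ 2 + C"
proof -
  define H where "H q s = (if q = 0 then 1 else 0) + (if s = v then G q else F q) / B" for q s
  define S where "S = (\<Sum>q<N. F q)"
  have H_sum: "(\<Sum>s<B. H q s) = (if q = 0 then real B else 0) + (G q + (real B - 1) * F q) / B" for q
    using \<open>v < B\<close> \<open>B > 0\<close>
    by (simp add: H_def sum.distrib sum_lessThan_if_eq sum_divide_distrib[symmetric] of_nat_diff)
  have "S \<le> (\<Sum>m<B * N. F m)"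
    unfolding S_def using \<open>B > 0\<close> F_nonneg by (intro sum_mono2) auto
  also have "\<dots> \<le> (\<Sum>m<B * N. H (m div B) (m mod B))"
    using F_rec \<open>B > 0\<close> by (intro sum_mono) (simp add: H_def div_eq_0_iff)
  also have "\<dots> = (\<Sum>q<N. \<Sum>s<B. H q s)"
    using \<open>B > 0\<close> by (rule sum_div_mod_reindex)
  also have "\<dots> = (\<Sum>q<N. if q = 0 then real B else 0) + ((\<Sum>q<N. G q) + (real B - 1) * S) / B"
    unfolding H_sum S_def by (simp add: sum.distrib sum_divide_distrib[symmetric] sum_distrib_left)
  also have "\<dots> \<le> B + (C + (real B - 1) * S) / B"
    using G_bound[of N] \<open>B > 0\<close> by (intro add_mono divide_right_mono) (auto simp: sum.delta)
  finally have "B * S \<le> B * B + C + (real B - 1) * S"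
    using \<open>B > 0\<close> by (simp add: field_simps)
  then show ?thesis
    by (simp add: S_def power2_eq_square algebra_simps)
qed

definition recip_occ_less :: "nat \<Rightarrow> nat list \<Rightarrow> nat \<Rightarrow> nat \<Rightarrow> real" where
  "recip_occ_less b w K m =
     (if 0 < m \<and> occurrences w (base_digits b m) < K then 1 / real m else 0)"

lemma recip_occ_less_nonneg: "0 \<le> recip_occ_less b w K m"
  by (simp add: recip_occ_less_def)

lemma occurrences_base_digits_div_pow_le:
  assumes "b \<ge> 2"
  shows "occurrences w (base_digits b (m div b ^ j)) \<le> occurrences w (base_digits b m)"
  using base_digits_div_pow_prefix[OF assms, of m j] by (metis occurrences_append_mono)

lemma occurrences_base_digits_div_block_less:
  assumes "b \<ge> 2" and "w \<noteq> []" and "\<forall>d\<in>set w. d < b"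
    and "0 < m div b ^ length w" and "m mod b ^ length w = digits_value b w"
  shows "occurrences w (base_digits b (m div b ^ length w)) < occurrences w (base_digits b m)"
proof -
  have "m div b ^ length w * b ^ length w + digits_value b w = m"
    using assms(5) by (metis div_mult_mod_eq)
  then have "base_digits b m = base_digits b (m div b ^ length w) @ w"
    using base_digits_append_block[OF assms(1,4,3)] by simp
  then show ?thesis
    using occurrences_append_self[OF assms(2)] by simp
qed

lemma recip_le_recip_div:
  assumes "0 < m div B"
  shows "1 / real m \<le> 1 / real (m div B) / B"
proof -
  have "B > 0" and "m > 0"
    using assms by (auto simp: div_greater_zero_iff)
  have "B * (m div B) \<le> m"
    by (metis div_times_less_eq_dividend mult.commute)
  then have "real B * real (m div B) \<le> real m"
    by (metis of_nat_mono of_nat_mult)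
  then have "1 / real m \<le> 1 / (real B * real (m div B))"
    using assms \<open>B > 0\<close> \<open>m > 0\<close> by (intro divide_left_mono) auto
  then show ?thesis
    by (simp add: mult.commute)
qed

lemma recip_occ_less_div_bound:
  assumes "b \<ge> 2" and "w \<noteq> []" and "\<forall>d\<in>set w. d < b"
  defines "B \<equiv> b ^ length w"
  shows "recip_occ_less b w (Suc K) m \<le> (if m < B then 1 else 0)
           + (if m mod B = digits_value b w then recip_occ_less b w K (m div B)
              else recip_occ_less b w (Suc K) (m div B)) / B"
    (is "_ \<le> ?first + ?rest / B")
proof -
  have "0 \<le> ?first" and "0 \<le> ?rest / B"
    by (simp_all add: recip_occ_less_nonneg)
  show ?thesis
  proof (cases "0 < m \<and> occurrences w (base_digits b m) \<le> K")
    case False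
    then have "recip_occ_less b w (Suc K) m = 0"
      by (simp add: recip_occ_less_def less_Suc_eq_le)
    with \<open>0 \<le> ?first\<close> \<open>0 \<le> ?rest / B\<close> show ?thesis
      by linarith
  next
    case True
    then have "0 < m" and occ_m: "occurrences w (base_digits b m) \<le> K"
      and lhs: "recip_occ_less b w (Suc K) m = 1 / real m"
      by (auto simp: recip_occ_less_def)
    show ?thesis
    proof (cases "m < B")
      case True
      have "1 / real m \<le> 1"
        using \<open>0 < m\<close> by simp
      with \<open>0 \<le> ?rest / B\<close> show ?thesis
        by (simp only: lhs True if_True)
    next
      case False
      then have "0 < m div B"
        using \<open>b \<ge> 2\<close> by (simp add: B_def div_greater_zero_iff)
      have "?rest = 1 / real (m div B)"
      proof (cases "m mod B = digits_value b w")
        case True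
        then have "occurrences w (base_digits b (m div B)) < K"
          using occurrences_base_digits_div_block_less[OF assms(1-3)] \<open>0 < m div B\<close> occ_m
          unfolding B_def by (meson order.strict_trans2)
        with True \<open>0 < m div B\<close> show ?thesis
          by (simp add: recip_occ_less_def)
      next
        case False
        have "occurrences w (base_digits b (m div B)) \<le> K"
          using occurrences_base_digits_div_pow_le[OF assms(1)] occ_m
          unfolding B_def by (meson order.trans)
        with False \<open>0 < m div B\<close> show ?thesis
          by (simp add: recip_occ_less_def)
      qed
      with \<open>\<not> m < B\<close> show ?thesis
        using lhs recip_le_recip_div[OF \<open>0 < m div B\<close>] by simp
    qed
  qed
qed

lemma sum_recip_occ_less_le:
  assumes "b \<ge> 2" and "w \<noteq> []" and "\<forall>d\<in>set w. d < b"
  shows "(\<Sum>m<N. recip_occ_less b w K m) \<le> K * real (b ^ length w) ^ 2"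
proof (induction K arbitrary: N)
  case 0
  show ?case by (simp add: recip_occ_less_def)
next
  case (Suc K)
  let ?B = "b ^ length w"
  have "(\<Sum>m<N. recip_occ_less b w (Suc K) m) \<le> real ?B ^ 2 + K * real ?B ^ 2"
  proof (rule sum_le_of_div_mod_recursion)
    show "0 < ?B" and "digits_value b w < ?B"
      using assms by (simp_all add: digits_value_less)
  qed (rule recip_occ_less_nonneg recip_occ_less_div_bound[OF assms] Suc.IH)+
  then show ?case
    by (simp add: algebra_simps)
qed

theorem lemma2:
  fixes b :: nat and w :: "nat list" and k :: nat
  assumes "b \<ge> 2" and "length w \<ge> 1" and "\<forall>d\<in>set w. d < b"
  shows "summable (\<lambda>m::nat. if m > 0 \<and> occurrences w (base_digits b m) = k
                             then 1 / real m else 0)"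
proof (rule summable_comparison_test)
  show "\<exists>N. \<forall>m\<ge>N. norm (if m > 0 \<and> occurrences w (base_digits b m) = k then 1 / real m else 0)
                      \<le> recip_occ_less b w (Suc k) m"
    by (auto simp: recip_occ_less_def)
  have "w \<noteq> []"
    using assms(2) by auto
  then show "summable (recip_occ_less b w (Suc k))"
    by (rule summableI_nonneg_bounded[OF recip_occ_less_nonneg
          sum_recip_occ_less_le[OF assms(1) _ assms(3)]])
qed

end
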